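(* Let $U$ be a Banach space with a normalized unconditional basis $(e_j)_{j=1}^\infty$ whose associated coordinate functionals $(e_j^* )$ form an unconditional weak$^*$ Schauder basis of $U^*$, and suppose $U^*$ with $(e_j^* )$ satisfies condition (C). Let $\Lambda\subset\mathbb{N}$ be infinite, $\eta>0$ and $\varphi\in U^{**}$. Then there exists an infinite set $\mathcal{A}\subset\Lambda$ such that $$\sup_{\|x^*\|_{U^*}\le1}|\langle\varphi,P_{\mathcal{A}}x^*\rangle|\le\eta.$$
   Context: Weak$^*$ Schauder basis: the coordinate functionals $(e_j^* )\subset U^*$ of $(e_j)$ satisfy $x^* = \text{weak}^*\text{-}\lim_n\sum_{j=1}^n\langle x^*,e_j\rangle e_j^*$ for all $x^*\in U^*$; series in $U^*$ are weak$^*$ limits. Unconditional: there is $C\ge1$ with $\|\sum_j\gamma_ja_je_j^*\|\le C\sup_j|\gamma_j|\,\|\sum_ja_je_j^*\|$ for all bounded $(\gamma_j)$; $K_u$ is the best such $C$. For $\mathcal{A}\subset\mathbb{N}$, $P_{\mathcal{A}}(\sum_ja_je_j^* )=\sum_{j\in\mathcal{A}}a_je_j^*$. Condition (C) (with $(e_j^* )$ normalized): for every infinite $\Lambda\subset\mathbb{N}$ and every $\theta>0$ there is a sequence $(\mathcal{A}_j)$ of pairwise disjoint infinite subsets of $\Lambda$ such that for every $(x_j^* )\subset U^*$ with $\|x_j^*\|\le1$ there are scalars $(a_j)\in\ell^1$ with $\|(a_j)\|_{\ell^1}=1$ and $\|\sum_{j=1}^\infty a_jP_{\mathcal{A}_j}x_j^*\|_{U^*}\le\theta$.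 *)

theory Defs
  imports "HOL-Analysis.Analysis"
begin

text \<open>Real Banach space U is a type 'a::banach; its dual U* is 'a \<Rightarrow>L real,
  the bidual is ('a \<Rightarrow>L real) \<Rightarrow>L real. Indices run over nat (starting at 0).\<close>

definition schauder_basis :: "(nat \<Rightarrow> 'a::real_normed_vector) \<Rightarrow> bool" where
  "schauder_basis e \<longleftrightarrow>
     (\<forall>x. \<exists>!c. (\<lambda>n. \<Sum>j<n. c j *\<^sub>R e j) \<longlonglongrightarrow> x)"

definition coordinate_functionals ::
    "(nat \<Rightarrow> 'a::real_normed_vector) \<Rightarrow> (nat \<Rightarrow> ('a \<Rightarrow>\<^sub>L real)) \<Rightarrow> bool" where
  "coordinate_functionals e es \<longleftrightarrow>
     (\<forall>x. (\<lambda>n. \<Sum>j<n. blinfun_apply (es j) x *\<^sub>R e j) \<longlonglongrightarrow> x)"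

definition unconditional_basis ::
    "(nat \<Rightarrow> 'a::real_normed_vector) \<Rightarrow> (nat \<Rightarrow> ('a \<Rightarrow>\<^sub>L real)) \<Rightarrow> bool" where
  "unconditional_basis e es \<longleftrightarrow>
     (\<exists>C\<ge>1. \<forall>x (\<gamma>::nat \<Rightarrow> real) M. (\<forall>j. \<bar>\<gamma> j\<bar> \<le> M) \<longrightarrow>
        (\<exists>y. (\<lambda>n. \<Sum>j<n. (\<gamma> j * blinfun_apply (es j) x) *\<^sub>R e j) \<longlonglongrightarrow> y
             \<and> norm y \<le> C * M * norm x))"

definition weak_star_lim ::
    "(nat \<Rightarrow> ('a::real_normed_vector \<Rightarrow>\<^sub>L real)) \<Rightarrow> ('a \<Rightarrow>\<^sub>L real) \<Rightarrow> bool" where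
  "weak_star_lim f y \<longleftrightarrow>
     (\<forall>x. (\<lambda>n. blinfun_apply (f n) x) \<longlonglongrightarrow> blinfun_apply y x)"

definition weak_star_schauder_basis ::
    "(nat \<Rightarrow> 'a::real_normed_vector) \<Rightarrow> (nat \<Rightarrow> ('a \<Rightarrow>\<^sub>L real)) \<Rightarrow> bool" where
  "weak_star_schauder_basis e es \<longleftrightarrow>
     (\<forall>xs. weak_star_lim (\<lambda>n. \<Sum>j<n. blinfun_apply xs (e j) *\<^sub>R es j) xs)"

definition unconditional_weak_star ::
    "(nat \<Rightarrow> 'a::real_normed_vector) \<Rightarrow> (nat \<Rightarrow> ('a \<Rightarrow>\<^sub>L real)) \<Rightarrow> bool" where
  "unconditional_weak_star e es \<longleftrightarrow>
     (\<exists>C\<ge>1. \<forall>xs (\<gamma>::nat \<Rightarrow> real) M. (\<forall>j. \<bar>\<gamma> j\<bar> \<le> M) \<longrightarrow>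
        (\<exists>y. weak_star_lim (\<lambda>n. \<Sum>j<n. (\<gamma> j * blinfun_apply xs (e j)) *\<^sub>R es j) y
             \<and> norm y \<le> C * M * norm xs))"

definition proj ::
    "(nat \<Rightarrow> 'a::real_normed_vector) \<Rightarrow> (nat \<Rightarrow> ('a \<Rightarrow>\<^sub>L real)) \<Rightarrow> nat set
       \<Rightarrow> ('a \<Rightarrow>\<^sub>L real) \<Rightarrow> ('a \<Rightarrow>\<^sub>L real)" where
  "proj e es A xs =
     (THE y. weak_star_lim (\<lambda>n. \<Sum>j\<in>A \<inter> {..<n}. blinfun_apply xs (e j) *\<^sub>R es j) y)"

definition condition_C ::
    "(nat \<Rightarrow> 'a::real_normed_vector) \<Rightarrow> (nat \<Rightarrow> ('a \<Rightarrow>\<^sub>L real)) \<Rightarrow> bool" where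
  "condition_C e es \<longleftrightarrow>
     (\<forall>\<Lambda> (\<theta>::real). infinite \<Lambda> \<and> \<theta> > 0 \<longrightarrow>
       (\<exists>\<A> :: nat \<Rightarrow> nat set. disjoint_family \<A> \<and> (\<forall>j. infinite (\<A> j) \<and> \<A> j \<subseteq> \<Lambda>) \<and>
          (\<forall>xs :: nat \<Rightarrow> ('a \<Rightarrow>\<^sub>L real). (\<forall>j. norm (xs j) \<le> 1) \<longrightarrow>
             (\<exists>a :: nat \<Rightarrow> real. summable (\<lambda>j. \<bar>a j\<bar>) \<and> (\<Sum>j. \<bar>a j\<bar>) = 1 \<and>
                (\<exists>y. weak_star_lim (\<lambda>n. \<Sum>j<n. a j *\<^sub>R proj e es (\<A> j) (xs j)) y
                     \<and> norm y \<le> \<theta>)))))"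

end

theory Submission
  imports Defs
begin

text \<open>If the conclusion failed, every infinite \<open>A \<subseteq> \<Lambda>\<close> would carry a unit functional
  \<open>x\<close> with \<open>|\<phi>(P_A x)| > \<eta>\<close>. Condition (C) yields disjoint \<open>A_j \<subseteq> \<Lambda>\<close> and an
  \<open>\<ell>1\<close>-normalised combination \<open>y = \<Sum> a_j P_{A_j} x_j\<close> of norm at most \<open>\<theta>\<close>. Because the
  \<open>A_j\<close> are disjoint, multiplying the coordinates in \<open>A_j\<close> by the sign of
  \<open>a_j \<phi>(P_{A_j} x_j)\<close> is a single multiplier bounded by 1, so unconditionality turns \<open>y\<close>
  into a norm-convergent series \<open>z\<close> with \<open>norm z \<le> C \<theta>\<close> and
  \<open>\<phi>(z) = \<Sum> |a_j| |\<phi>(P_{A_j} x_j)| \<ge> \<eta>\<close>. For \<open>\<theta> < \<eta> / (C norm \<phi>)\<close> this is absurd.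
  Norm convergence of \<open>z\<close> matters: \<open>\<phi>\<close> is only norm continuous, not weak* continuous.\<close>

definition unconditional_weak_star_const ::
    "real \<Rightarrow> (nat \<Rightarrow> 'a::real_normed_vector) \<Rightarrow> (nat \<Rightarrow> ('a \<Rightarrow>\<^sub>L real)) \<Rightarrow> bool" where
  "unconditional_weak_star_const C e es \<longleftrightarrow>
     (\<forall>xs (\<gamma>::nat \<Rightarrow> real) M. (\<forall>j. \<bar>\<gamma> j\<bar> \<le> M) \<longrightarrow>
        (\<exists>y. weak_star_lim (\<lambda>n. \<Sum>j<n. (\<gamma> j * blinfun_apply xs (e j)) *\<^sub>R es j) y
             \<and> norm y \<le> C * M * norm xs))"

lemma unconditional_weak_star_iff:
  "unconditional_weak_star e es \<longleftrightarrow> (\<exists>C\<ge>1. unconditional_weak_star_const C e es)"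
  unfolding unconditional_weak_star_def unconditional_weak_star_const_def ..

lemma weak_star_lim_unique:
  assumes "weak_star_lim f y" "weak_star_lim f y'"
  shows "y = y'"
  using assms unfolding weak_star_lim_def by (metis LIMSEQ_unique blinfun_eqI)

lemma sums_single_support:
  assumes "\<And>j. j \<noteq> i \<Longrightarrow> g j = 0"
  shows "g sums g i"
proof -
  have "g = (\<lambda>j. if j = i then g j else 0)" using assms by auto
  then show ?thesis using sums_single[of i g] by simp
qed

lemma disjoint_family_single_index:
  assumes "disjoint_family A"
  shows "\<exists>i. \<forall>j. j \<noteq> i \<longrightarrow> k \<notin> A j"
  using assms unfolding disjoint_family_on_def by blast

lemma schauder_basis_coefficients_unique:
  assumes "schauder_basis e"
    and "(\<lambda>n. \<Sum>j<n. c j *\<^sub>R e j) \<longlonglongrightarrow> x" "(\<lambda>n. \<Sum>j<n. c' j *\<^sub>R e j) \<longlonglongrightarrow> x"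
  shows "c = c'"
  using assms(1)[unfolded schauder_basis_def, rule_format, of x] assms(2,3) by blast

lemma coordinate_functionals_biorthogonal:
  assumes "schauder_basis e" "coordinate_functionals e es"
  shows "blinfun_apply (es j) (e k) = (if j = k then 1 else 0)"
proof -
  have expansion: "(\<lambda>n. \<Sum>j<n. blinfun_apply (es j) (e k) *\<^sub>R e j) \<longlonglongrightarrow> e k"
    using assms(2) unfolding coordinate_functionals_def by blast
  have "(\<lambda>j. (if j = k then 1 else 0) *\<^sub>R e j) sums e k"
    using sums_single_support[of k "\<lambda>j. (if j = k then 1 else 0) *\<^sub>R e j"] by simp
  then have trivial: "(\<lambda>n. \<Sum>j<n. (if j = k then 1 else 0) *\<^sub>R e j) \<longlonglongrightarrow> e k"
    by (simp add: sums_def)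
  from schauder_basis_coefficients_unique[OF assms(1) expansion trivial]
  show ?thesis by (rule fun_cong)
qed

lemma weak_star_lim_coordinate:
  assumes "schauder_basis e" "coordinate_functionals e es"
    and "weak_star_lim (\<lambda>n. \<Sum>j<n. c j *\<^sub>R es j) y"
  shows "blinfun_apply y (e k) = c k"
proof -
  have "(\<lambda>j. c j * blinfun_apply (es j) (e k)) sums c k"
    using sums_single_support[of k "\<lambda>j. c j * blinfun_apply (es j) (e k)"]
    by (simp add: coordinate_functionals_biorthogonal[OF assms(1,2)])
  moreover have "(\<lambda>n. \<Sum>j<n. c j * blinfun_apply (es j) (e k)) \<longlonglongrightarrow> blinfun_apply y (e k)"
    using assms(3) unfolding weak_star_lim_def by (simp add: blinfun.sum_left blinfun.scaleR_left)
  ultimately show ?thesis by (simp add: sums_def LIMSEQ_unique)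
qed

lemma weak_star_schauder_basis_eqI:
  fixes f g :: "'a::real_normed_vector \<Rightarrow>\<^sub>L real"
  assumes "weak_star_schauder_basis e es"
    and "\<And>k. blinfun_apply f (e k) = blinfun_apply g (e k)"
  shows "f = g"
proof -
  have "weak_star_lim (\<lambda>n. \<Sum>j<n. blinfun_apply f (e j) *\<^sub>R es j) f"
    and "weak_star_lim (\<lambda>n. \<Sum>j<n. blinfun_apply g (e j) *\<^sub>R es j) g"
    using assms(1) unfolding weak_star_schauder_basis_def by blast+
  then show ?thesis using assms(2) weak_star_lim_unique by simp
qed

lemma proj_spec:
  assumes "unconditional_weak_star_const C e es"
  shows "weak_star_lim (\<lambda>n. \<Sum>j<n. (if j \<in> A then blinfun_apply xs (e j) else 0) *\<^sub>R es j)
           (proj e es A xs)"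
    and "norm (proj e es A xs) \<le> C * norm xs"
proof -
  have indicator_series: "(\<Sum>j<n. (if j \<in> A then blinfun_apply xs (e j) else 0) *\<^sub>R es j)
      = (\<Sum>j\<in>A \<inter> {..<n}. blinfun_apply xs (e j) *\<^sub>R es j)" for n
    by (simp add: sum.inter_restrict[of "{..<n}", symmetric] Int_commute if_distrib[of "\<lambda>c. c *\<^sub>R _"]
        cong: if_cong)
  have indicator_bound: "\<bar>if j \<in> A then 1 else 0 :: real\<bar> \<le> 1" for j by simp
  have indicator_coeff: "((if j \<in> A then 1 else 0) * blinfun_apply xs (e j)) *\<^sub>R es j
      = (if j \<in> A then blinfun_apply xs (e j) else 0) *\<^sub>R es j" for j
    by simp
  from assms[unfolded unconditional_weak_star_const_def, rule_format,
      where \<gamma>="\<lambda>j. if j \<in> A then 1 else 0" and M=1 and xs=xs, OF indicator_bound]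
  obtain y where
    y: "weak_star_lim (\<lambda>n. \<Sum>j<n. (if j \<in> A then blinfun_apply xs (e j) else 0) *\<^sub>R es j) y"
      and "norm y \<le> C * norm xs"
    unfolding indicator_coeff by auto
  moreover from y have "proj e es A xs = y"
    unfolding proj_def indicator_series using weak_star_lim_unique by blast
  ultimately show "weak_star_lim (\<lambda>n. \<Sum>j<n. (if j \<in> A then blinfun_apply xs (e j) else 0) *\<^sub>R es j)
           (proj e es A xs)" and "norm (proj e es A xs) \<le> C * norm xs"
    by simp_all
qed

lemma proj_apply_basis:
  assumes "schauder_basis e" "coordinate_functionals e es" "unconditional_weak_star_const C e es"
  shows "blinfun_apply (proj e es A xs) (e k) = (if k \<in> A then blinfun_apply xs (e k) else 0)"
  using weak_star_lim_coordinate[OF assms(1,2) proj_spec(1)[OF assms(3)]] .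

lemma norm_suminf_disjoint_sign_change_le:
  fixes P :: "nat \<Rightarrow> ('a::real_normed_vector \<Rightarrow>\<^sub>L real)"
  assumes basis: "schauder_basis e" "coordinate_functionals e es" "weak_star_schauder_basis e es"
    and unconditional: "unconditional_weak_star_const C e es"
    and disjoint: "disjoint_family A"
    and support: "\<And>j k. k \<notin> A j \<Longrightarrow> blinfun_apply (P j) (e k) = 0"
    and y: "weak_star_lim (\<lambda>n. \<Sum>j<n. a j *\<^sub>R P j) y"
    and signs: "\<And>j. \<bar>\<sigma> j\<bar> \<le> 1"
    and summable: "summable (\<lambda>j. (\<sigma> j * a j) *\<^sub>R P j)"
  shows "norm (\<Sum>j. (\<sigma> j * a j) *\<^sub>R P j) \<le> C * norm y"
proof -
  \<comment> \<open>well defined because each \<open>k\<close> lies in at most one \<open>A j\<close>\<close>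
  define \<gamma> where "\<gamma> k = (if \<exists>j. k \<in> A j then \<sigma> (THE j. k \<in> A j) else 0)" for k
  have \<gamma>_bound: "\<bar>\<gamma> k\<bar> \<le> 1" for k
    using signs by (simp add: \<gamma>_def)
  from unconditional[unfolded unconditional_weak_star_const_def, rule_format,
      where \<gamma>=\<gamma> and M=1 and xs=y, OF \<gamma>_bound]
  obtain y' where y': "weak_star_lim (\<lambda>n. \<Sum>k<n. (\<gamma> k * blinfun_apply y (e k)) *\<^sub>R es k) y'"
    and "norm y' \<le> C * norm y"
    by auto
  have "(\<Sum>j. (\<sigma> j * a j) *\<^sub>R P j) = y'"
  proof (rule weak_star_schauder_basis_eqI[OF basis(3)])
    fix k
    obtain i where other: "\<And>j. j \<noteq> i \<Longrightarrow> k \<notin> A j"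
      using disjoint_family_single_index[OF disjoint, of k] by blast
    have "(\<lambda>j. a j * blinfun_apply (P j) (e k)) sums (a i * blinfun_apply (P i) (e k))"
      using sums_single_support[of i "\<lambda>j. a j * blinfun_apply (P j) (e k)"] other support by simp
    moreover have "(\<lambda>n. \<Sum>j<n. a j * blinfun_apply (P j) (e k)) \<longlonglongrightarrow> blinfun_apply y (e k)"
      using y unfolding weak_star_lim_def by (simp add: blinfun.sum_left blinfun.scaleR_left)
    ultimately have y_coord: "blinfun_apply y (e k) = a i * blinfun_apply (P i) (e k)"
      by (simp add: sums_def LIMSEQ_unique)
    have "(\<lambda>j. (\<sigma> j * a j) * blinfun_apply (P j) (e k))
        sums (\<sigma> i * a i * blinfun_apply (P i) (e k))"
      using sums_single_support[of i "\<lambda>j. (\<sigma> j * a j) * blinfun_apply (P j) (e k)"] other support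
      by simp
    moreover have "(\<lambda>j. (\<sigma> j * a j) * blinfun_apply (P j) (e k))
        sums blinfun_apply (\<Sum>j. (\<sigma> j * a j) *\<^sub>R P j) (e k)"
      using bounded_linear.sums[OF blinfun.bounded_linear_left summable_sums[OF summable]]
      by (simp add: blinfun.scaleR_left)
    ultimately have sum_coord:
      "blinfun_apply (\<Sum>j. (\<sigma> j * a j) *\<^sub>R P j) (e k) = \<sigma> i * a i * blinfun_apply (P i) (e k)"
      by (simp add: sums_unique2)
    have "\<sigma> i * a i * blinfun_apply (P i) (e k) = \<gamma> k * (a i * blinfun_apply (P i) (e k))"
    proof (cases "k \<in> A i")
      case True
      then have "(THE j. k \<in> A j) = i"
        by (rule the_equality) (use other in blast)
      with True have "\<gamma> k = \<sigma> i" unfolding \<gamma>_def by auto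
      then show ?thesis by (simp add: mult.assoc)
    qed (simp add: support)
    then show "blinfun_apply (\<Sum>j. (\<sigma> j * a j) *\<^sub>R P j) (e k) = blinfun_apply y' (e k)"
      unfolding sum_coord weak_star_lim_coordinate[OF basis(1,2) y'] y_coord .
  qed
  with \<open>norm y' \<le> C * norm y\<close> show ?thesis by simp
qed

lemma blinfun_suminf_sign_aligned_ge:
  fixes P :: "nat \<Rightarrow> 'b::banach" and f :: "'b \<Rightarrow>\<^sub>L real"
  assumes "(\<lambda>j. \<bar>a j\<bar>) sums 1"
    and "\<And>j. norm (P j) \<le> B" "\<And>j. \<eta> \<le> \<bar>blinfun_apply f (P j)\<bar>"
  obtains \<sigma> where "\<And>j. \<bar>\<sigma> j\<bar> \<le> 1" "summable (\<lambda>j. (\<sigma> j * a j) *\<^sub>R P j)"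
    "\<eta> \<le> blinfun_apply f (\<Sum>j. (\<sigma> j * a j) *\<^sub>R P j)"
proof -
  define \<sigma> where "\<sigma> j = sgn (a j) * sgn (blinfun_apply f (P j))" for j
  have signs: "\<bar>\<sigma> j\<bar> \<le> 1" for j
    by (simp add: \<sigma>_def abs_mult sgn_if)
  have "norm ((\<sigma> j * a j) *\<^sub>R P j) \<le> \<bar>a j\<bar> * B" for j
  proof -
    have "\<bar>\<sigma> j\<bar> * (\<bar>a j\<bar> * norm (P j)) \<le> \<bar>a j\<bar> * norm (P j)"
      using signs by (intro mult_left_le_one_le) auto
    then have "norm ((\<sigma> j * a j) *\<^sub>R P j) \<le> \<bar>a j\<bar> * norm (P j)"
      by (simp add: abs_mult mult.assoc)
    also have "\<dots> \<le> \<bar>a j\<bar> * B" by (simp add: assms(2) mult_left_mono)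
    finally show ?thesis .
  qed
  then have summable: "summable (\<lambda>j. (\<sigma> j * a j) *\<^sub>R P j)"
    by (intro summable_comparison_test'[OF summable_mult2[OF sums_summable[OF assms(1)]]])
  have "(\<lambda>j. blinfun_apply f ((\<sigma> j * a j) *\<^sub>R P j))
      sums blinfun_apply f (\<Sum>j. (\<sigma> j * a j) *\<^sub>R P j)"
    by (rule bounded_linear.sums[OF blinfun.bounded_linear_right summable_sums[OF summable]])
  moreover have "blinfun_apply f ((\<sigma> j * a j) *\<^sub>R P j) = \<bar>a j\<bar> * \<bar>blinfun_apply f (P j)\<bar>" for j
  proof -
    have sgn_times_self: "sgn x * x = \<bar>x\<bar>" for x :: real
      by (simp add: sgn_if)
    show ?thesis
      by (simp add: \<sigma>_def blinfun.scaleR_right sgn_times_self[symmetric] ac_simps)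
  qed
  ultimately have aligned: "(\<lambda>j. \<bar>a j\<bar> * \<bar>blinfun_apply f (P j)\<bar>)
      sums blinfun_apply f (\<Sum>j. (\<sigma> j * a j) *\<^sub>R P j)"
    by simp
  have "\<bar>a j\<bar> * \<eta> \<le> \<bar>a j\<bar> * \<bar>blinfun_apply f (P j)\<bar>" for j
    by (simp add: assms(3) mult_left_mono)
  from sums_le[OF this sums_mult2[OF assms(1)] aligned]
  have "\<eta> \<le> blinfun_apply f (\<Sum>j. (\<sigma> j * a j) *\<^sub>R P j)"
    by simp
  with signs summable show thesis by (rule that)
qed

lemma proj_combination_lower_bound:
  fixes \<phi> :: "('a::real_normed_vector \<Rightarrow>\<^sub>L real) \<Rightarrow>\<^sub>L real"
  assumes basis: "schauder_basis e" "coordinate_functionals e es" "weak_star_schauder_basis e es"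
    and unconditional: "unconditional_weak_star_const C e es" "0 \<le> C"
    and disjoint: "disjoint_family A"
    and X: "\<And>j. norm (X j) \<le> 1" "\<And>j. \<eta> \<le> \<bar>blinfun_apply \<phi> (proj e es (A j) (X j))\<bar>"
    and a: "(\<lambda>j. \<bar>a j\<bar>) sums 1"
    and y: "weak_star_lim (\<lambda>n. \<Sum>j<n. a j *\<^sub>R proj e es (A j) (X j)) y"
  shows "\<eta> \<le> norm \<phi> * (C * norm y)"
proof -
  define P where "P j = proj e es (A j) (X j)" for j
  have "norm (P j) \<le> C" for j
    using order_trans[OF proj_spec(2)[OF unconditional(1)] mult_left_le[OF X(1) unconditional(2)]]
    unfolding P_def .
  from blinfun_suminf_sign_aligned_ge[where P=P and B=C, OF a this X(2)[folded P_def]]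
  obtain \<sigma> where signs: "\<And>j. \<bar>\<sigma> j\<bar> \<le> 1"
    and summable: "summable (\<lambda>j. (\<sigma> j * a j) *\<^sub>R P j)"
    and aligned: "\<eta> \<le> blinfun_apply \<phi> (\<Sum>j. (\<sigma> j * a j) *\<^sub>R P j)"
    by blast
  have "\<eta> \<le> norm \<phi> * norm (\<Sum>j. (\<sigma> j * a j) *\<^sub>R P j)"
    using aligned abs_le_D1[OF norm_blinfun[of \<phi>, unfolded real_norm_def]] by (rule order_trans)
  also have "\<dots> \<le> norm \<phi> * (C * norm y)"
    by (intro mult_left_mono norm_suminf_disjoint_sign_change_le[OF basis unconditional(1) disjoint
          _ y[folded P_def] signs summable])
       (simp_all add: P_def proj_apply_basis[OF basis(1,2) unconditional(1)])
  finally show ?thesis .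
qed

lemma condition_C_lower_bound:
  fixes \<phi> :: "('a::real_normed_vector \<Rightarrow>\<^sub>L real) \<Rightarrow>\<^sub>L real"
  assumes basis: "schauder_basis e" "coordinate_functionals e es" "weak_star_schauder_basis e es"
    and unconditional: "unconditional_weak_star_const C e es" "0 \<le> C"
    and "condition_C e es" "infinite \<Lambda>" "\<theta> > 0"
    and large: "\<And>A. A \<subseteq> \<Lambda> \<Longrightarrow> infinite A \<Longrightarrow>
      \<exists>xs. norm xs \<le> 1 \<and> \<eta> < \<bar>blinfun_apply \<phi> (proj e es A xs)\<bar>"
  shows "\<eta> \<le> norm \<phi> * (C * \<theta>)"
proof -
  from assms(6)[unfolded condition_C_def, rule_format, OF conjI[OF assms(7,8)]]
  obtain A where disjoint: "disjoint_family A"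
    and A: "\<forall>j. infinite (A j) \<and> A j \<subseteq> \<Lambda>"
    and small: "\<forall>X. (\<forall>j. norm (X j) \<le> 1) \<longrightarrow> (\<exists>a. summable (\<lambda>j. \<bar>a j\<bar>) \<and> (\<Sum>j. \<bar>a j\<bar>) = 1 \<and>
        (\<exists>y. weak_star_lim (\<lambda>n. \<Sum>j<n. a j *\<^sub>R proj e es (A j) (X j)) y \<and> norm y \<le> \<theta>))"
    by (elim exE conjE)
  have "\<forall>j. \<exists>xs. norm xs \<le> 1 \<and> \<eta> < \<bar>blinfun_apply \<phi> (proj e es (A j) xs)\<bar>"
    using A large by simp
  from choice[OF this] obtain X
    where X: "\<forall>j. norm (X j) \<le> 1 \<and> \<eta> < \<bar>blinfun_apply \<phi> (proj e es (A j) (X j))\<bar>"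
    by (elim exE)
  then have "\<forall>j. norm (X j) \<le> 1" by simp
  with small obtain a y where a: "summable (\<lambda>j. \<bar>a j\<bar>)" "(\<Sum>j. \<bar>a j\<bar>) = 1"
    and y: "weak_star_lim (\<lambda>n. \<Sum>j<n. a j *\<^sub>R proj e es (A j) (X j)) y" "norm y \<le> \<theta>"
    by (elim allE[of _ X] impE exE conjE) auto
  from a have "(\<lambda>j. \<bar>a j\<bar>) sums 1"
    using summable_sums by fastforce
  then have "\<eta> \<le> norm \<phi> * (C * norm y)"
    by (intro proj_combination_lower_bound[OF basis unconditional disjoint _ _ _ y(1)]) (use X in \<open>simp_all add: less_imp_le\<close>)
  also have "\<dots> \<le> norm \<phi> * (C * \<theta>)"
    using y(2) unconditional(2) by (simp add: mult_left_mono)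
  finally show ?thesis .
qed

theorem lemma3p2:
  fixes e :: "nat \<Rightarrow> 'a::banach"
    and es :: "nat \<Rightarrow> ('a \<Rightarrow>\<^sub>L real)"
    and \<Lambda> :: "nat set"
    and \<eta> :: real
    and \<phi> :: "('a \<Rightarrow>\<^sub>L real) \<Rightarrow>\<^sub>L real"
  assumes "schauder_basis e"
    and "\<forall>j. norm (e j) = 1"
    and "coordinate_functionals e es"
    and "unconditional_basis e es"
    and "weak_star_schauder_basis e es"
    and "unconditional_weak_star e es"
    and "condition_C e es"
    and "infinite \<Lambda>"
    and "\<eta> > 0"
  shows "\<exists>\<A>. \<A> \<subseteq> \<Lambda> \<and> infinite \<A> \<and>
           (\<forall>xs :: 'a \<Rightarrow>\<^sub>L real. norm xs \<le> 1 \<longrightarrow>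
              \<bar>blinfun_apply \<phi> (proj e es \<A> xs)\<bar> \<le> \<eta>)"
proof (rule ccontr)
  assume "\<not> ?thesis"
  then have large: "\<exists>xs. norm xs \<le> 1 \<and> \<eta> < \<bar>blinfun_apply \<phi> (proj e es A xs)\<bar>"
    if "A \<subseteq> \<Lambda>" "infinite A" for A
    using that by (auto simp: not_le)
  obtain C where "C \<ge> 1" and unconditional: "unconditional_weak_star_const C e es"
    using assms(6) unfolding unconditional_weak_star_iff by blast
  define \<theta> where "\<theta> = \<eta> / ((norm \<phi> + 1) * C)"
  have "\<theta> > 0"
    unfolding \<theta>_def using assms(9) \<open>C \<ge> 1\<close> by (simp add: add_nonneg_pos)
  with \<open>C \<ge> 1\<close> have "\<eta> \<le> norm \<phi> * (C * \<theta>)"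
    using condition_C_lower_bound[OF assms(1,3,5) unconditional _ assms(7,8) _ large] by simp
  also have "\<dots> = \<eta> * (norm \<phi> / (norm \<phi> + 1))"
    using \<open>C \<ge> 1\<close> by (simp add: \<theta>_def add_nonneg_pos)
  also have "\<dots> < \<eta> * 1"
    by (intro mult_strict_left_mono assms(9)) (simp add: add_nonneg_pos)
  finally show False by simp
qed

end
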